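(* Let $(X,r)$ be a non-degenerate involutive set-theoretic solution with $|X|=n$, identified with $\{1,\dots,n\}$, and let $(\mathcal{X}^2,\tilde r)$ be the induced pair. Then: (i) if $(X,r)$ is irretractable, then $(\mathcal{X}^2,\tilde r)$ is irretractable; (ii) if $(X,r)$ is a multipermutation solution of level $\ell$, then $(\mathcal{X}^2,\tilde r)$ is a multipermutation solution of level $\ell$; (iii) if $(X,r)$ is decomposable, then $(\mathcal{X}^2,\tilde r)$ is decomposable.
   Context: A set-theoretic solution is $r:X\times X\to X\times X$, $r(x,y)=(\sigma_x(y),\gamma_y(x))$, with $r^{12}r^{23}r^{12}=r^{23}r^{12}r^{23}$ ($r^{12}=r\times\mathrm{Id}_X$, $r^{23}=\mathrm{Id}_X\times r$); non-degenerate: all $\sigma_x,\gamma_x$ bijective; involutive: $r\circ r=\mathrm{Id}$. Induced pair: $\mathcal{X}^2=\{T_i^k:1\le i,k\le n\}$ ($n^2$ symbols), $\tilde r(T_i^k,T_j^l)=(T_{\sigma_i(j)}^{\sigma_k(l)},T_{\gamma_j(i)}^{\gamma_l(k)})$, a non-degenerate involutive solution with maps $g_i^k(T_j^l)=T_{\sigma_i(j)}^{\sigma_k(l)}$ in the role of $\sigma$. Retraction: $x\sim y$ iff $\sigma_x=\sigma_y$; $\mathrm{Ret}(X,r)=(X/\!\sim,r')$ with $r'([x],[y])=([\sigma_x(y)],[\gamma_y(x)])$, $\mathrm{Ret}^k=\mathrm{Ret}(\mathrm{Ret}^{k-1})$. $(X,r)$ is a multipermutation solution of level $\ell$ if $\ell$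 is the smallest natural number with $|\mathrm{Ret}^\ell(X,r)|=1$; irretractable if no such $\ell$ exists. A subset $Y$ is non-degenerate invariant if $r(Y\times Y)\subseteq Y\times Y$ and $(Y,r|_{Y^2})$ is a non-degenerate involutive solution; $(X,r)$ is decomposable if $X$ is a union of two non-empty disjoint non-degenerate invariant subsets. *)

theory Defs
  imports Main
begin

type_synonym 'a sol_map = "'a \<times> 'a \<Rightarrow> 'a \<times> 'a"

definition sig :: "'a sol_map \<Rightarrow> 'a \<Rightarrow> 'a \<Rightarrow> 'a" where
  "sig r x y = fst (r (x, y))"

definition gam :: "'a sol_map \<Rightarrow> 'a \<Rightarrow> 'a \<Rightarrow> 'a" where
  "gam r y x = snd (r (x, y))"

definition r12 :: "'a sol_map \<Rightarrow> 'a \<times> 'a \<times> 'a \<Rightarrow> 'a \<times> 'a \<times> 'a" where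
  "r12 r t = (case t of (x, y, z) \<Rightarrow> (fst (r (x, y)), snd (r (x, y)), z))"

definition r23 :: "'a sol_map \<Rightarrow> 'a \<times> 'a \<times> 'a \<Rightarrow> 'a \<times> 'a \<times> 'a" where
  "r23 r t = (case t of (x, y, z) \<Rightarrow> (x, fst (r (y, z)), snd (r (y, z))))"

definition is_solution :: "'a set \<Rightarrow> 'a sol_map \<Rightarrow> bool" where
  "is_solution X r \<longleftrightarrow>
     (\<forall>p \<in> X \<times> X. r p \<in> X \<times> X) \<and>
     (\<forall>t \<in> X \<times> X \<times> X. r12 r (r23 r (r12 r t)) = r23 r (r12 r (r23 r t)))"

definition nondegenerate :: "'a set \<Rightarrow> 'a sol_map \<Rightarrow> bool" where
  "nondegenerate X r \<longleftrightarrow>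
     (\<forall>x \<in> X. bij_betw (sig r x) X X \<and> bij_betw (gam r x) X X)"

definition involutive :: "'a set \<Rightarrow> 'a sol_map \<Rightarrow> bool" where
  "involutive X r \<longleftrightarrow> (\<forall>p \<in> X \<times> X. r (r p) = p)"

definition nd_inv_solution :: "'a set \<Rightarrow> 'a sol_map \<Rightarrow> bool" where
  "nd_inv_solution X r \<longleftrightarrow> is_solution X r \<and> nondegenerate X r \<and> involutive X r"

text \<open>Induced pair on X^2: T_i^k is the pair (i,k).\<close>
definition induced :: "'a sol_map \<Rightarrow> ('a \<times> 'a) sol_map" where
  "induced r p = (case p of ((i, k), (j, l)) \<Rightarrow>
      ((sig r i j, sig r k l), (gam r j i, gam r l k)))"

text \<open>Iterated retraction, represented by the equivalence relation on X whose
  classes are the elements of Ret^k(X,r): Ret^0 is X itself, and [x]_{k+1} = [y]_{k+1}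
  iff the maps sigma_[x] and sigma_[y] of Ret^k(X,r) coincide, i.e.
  sigma_x(z) ~_k sigma_y(z) for all z.\<close>
fun ret_rel :: "'a set \<Rightarrow> 'a sol_map \<Rightarrow> nat \<Rightarrow> ('a \<times> 'a) set" where
  "ret_rel X r 0 = Id_on X"
| "ret_rel X r (Suc k) =
     {(x, y). x \<in> X \<and> y \<in> X \<and> (\<forall>z \<in> X. (sig r x z, sig r y z) \<in> ret_rel X r k)}"

definition ret_card :: "'a set \<Rightarrow> 'a sol_map \<Rightarrow> nat \<Rightarrow> nat" where
  "ret_card X r k = card (X // ret_rel X r k)"

definition multipermutation_level :: "'a set \<Rightarrow> 'a sol_map \<Rightarrow> nat \<Rightarrow> bool" where
  "multipermutation_level X r l \<longleftrightarrow>
     ret_card X r l = 1 \<and> (\<forall>m < l. ret_card X r m \<noteq> 1)"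

definition irretractable :: "'a set \<Rightarrow> 'a sol_map \<Rightarrow> bool" where
  "irretractable X r \<longleftrightarrow> \<not> (\<exists>l. ret_card X r l = 1)"

definition nd_invariant :: "'a set \<Rightarrow> 'a sol_map \<Rightarrow> 'a set \<Rightarrow> bool" where
  "nd_invariant X r Y \<longleftrightarrow> Y \<subseteq> X \<and> r ` (Y \<times> Y) \<subseteq> Y \<times> Y \<and> nd_inv_solution Y r"

definition decomposable :: "'a set \<Rightarrow> 'a sol_map \<Rightarrow> bool" where
  "decomposable X r \<longleftrightarrow> (\<exists>Y Z. Y \<noteq> {} \<and> Z \<noteq> {} \<and> Y \<inter> Z = {} \<and> X = Y \<union> Z \<and>
      nd_invariant X r Y \<and> nd_invariant X r Z)"

end

theory Submission
  imports Defs
begin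

text \<open>Under the reordering \<open>((i, k), (j, l)) \<mapsto> ((i, j), (k, l))\<close> of coordinates the
  induced map is just \<open>r \<times> r\<close>. Hence the braid relation, non-degeneracy and involutivity hold
  coordinatewise on any product \<open>Y \<times> W\<close> of sub-solutions, and the retraction relations of the
  induced solution are the products of those of \<open>r\<close>. So \<open>|Ret\<^sup>m(X\<^sup>2)| = |Ret\<^sup>m(X)|\<^sup>2\<close>, which
  is \<open>1\<close> exactly when \<open>|Ret\<^sup>m(X)| = 1\<close>, and a decomposition \<open>X = Y \<union> Z\<close> yields the
  decomposition \<open>X\<^sup>2 = (Y \<times> X) \<union> (Z \<times> X)\<close>.\<close>

lemma sig_induced: "sig (induced r) (i, k) (j, l) = (sig r i j, sig r k l)"
  by (simp add: sig_def induced_def)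

lemma gam_induced: "gam (induced r) (j, l) (i, k) = (gam r j i, gam r l k)"
  by (simp add: gam_def induced_def)

lemma induced_apply:
  "induced r ((i, k), (j, l)) = ((fst (r (i, j)), fst (r (k, l))), (snd (r (i, j)), snd (r (k, l))))"
  by (simp add: induced_def sig_def gam_def)

definition zip_triple :: "'a \<times> 'a \<times> 'a \<Rightarrow> 'a \<times> 'a \<times> 'a \<Rightarrow> ('a \<times> 'a) \<times> ('a \<times> 'a) \<times> ('a \<times> 'a)" where
  "zip_triple s t = (case s of (a, b, c) \<Rightarrow> case t of (a', b', c') \<Rightarrow> ((a, a'), (b, b'), (c, c')))"

lemma r12_induced_zip_triple: "r12 (induced r) (zip_triple s t) = zip_triple (r12 r s) (r12 r t)"
  by (cases s; cases t) (simp add: zip_triple_def r12_def induced_apply split: prod.split)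

lemma r23_induced_zip_triple: "r23 (induced r) (zip_triple s t) = zip_triple (r23 r s) (r23 r t)"
  by (cases s; cases t) (simp add: zip_triple_def r23_def induced_apply split: prod.split)

lemma is_solution_induced_Times:
  assumes Y: "is_solution Y r" and W: "is_solution W r"
  shows "is_solution (Y \<times> W) (induced r)"
  unfolding is_solution_def
proof (intro conjI ballI)
  fix p assume "p \<in> (Y \<times> W) \<times> (Y \<times> W)"
  then obtain i k j l where p: "p = ((i, k), (j, l))" "i \<in> Y" "j \<in> Y" "k \<in> W" "l \<in> W"
    by auto
  have "r (i, j) \<in> Y \<times> Y" "r (k, l) \<in> W \<times> W"
    using p Y W by (auto simp: is_solution_def)
  then show "induced r p \<in> (Y \<times> W) \<times> (Y \<times> W)"
    by (auto simp: p(1) induced_apply mem_Times_iff)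
next
  fix t assume "t \<in> (Y \<times> W) \<times> (Y \<times> W) \<times> (Y \<times> W)"
  then obtain s u where t: "t = zip_triple s u" "s \<in> Y \<times> Y \<times> Y" "u \<in> W \<times> W \<times> W"
    by (auto simp: zip_triple_def)
  have "r12 r (r23 r (r12 r s)) = r23 r (r12 r (r23 r s))"
    "r12 r (r23 r (r12 r u)) = r23 r (r12 r (r23 r u))"
    using t Y W unfolding is_solution_def by blast+
  then show "r12 (induced r) (r23 (induced r) (r12 (induced r) t))
      = r23 (induced r) (r12 (induced r) (r23 (induced r) t))"
    by (simp add: t(1) r12_induced_zip_triple r23_induced_zip_triple)
qed

lemma nondegenerate_induced_Times:
  assumes Y: "nondegenerate Y r" and W: "nondegenerate W r"
  shows "nondegenerate (Y \<times> W) (induced r)"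
  unfolding nondegenerate_def
proof (intro ballI conjI)
  fix x assume "x \<in> Y \<times> W"
  then obtain i k where x: "x = (i, k)" "i \<in> Y" "k \<in> W"
    by auto
  have "sig (induced r) x = map_prod (sig r i) (sig r k)"
    by (auto simp: x(1) sig_induced)
  then show "bij_betw (sig (induced r) x) (Y \<times> W) (Y \<times> W)"
    using x Y W by (simp add: nondegenerate_def bij_betw_map_prod)
  have "gam (induced r) x = map_prod (gam r i) (gam r k)"
    by (auto simp: x(1) gam_induced)
  then show "bij_betw (gam (induced r) x) (Y \<times> W) (Y \<times> W)"
    using x Y W by (simp add: nondegenerate_def bij_betw_map_prod)
qed

lemma involutive_induced_Times:
  assumes Y: "involutive Y r" and W: "involutive W r"
  shows "involutive (Y \<times> W) (induced r)"
  unfolding involutive_def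
proof
  fix p assume "p \<in> (Y \<times> W) \<times> (Y \<times> W)"
  then obtain i k j l where p: "p = ((i, k), (j, l))" "i \<in> Y" "j \<in> Y" "k \<in> W" "l \<in> W"
    by auto
  have "r (r (i, j)) = (i, j)" "r (r (k, l)) = (k, l)"
    using p Y W by (auto simp: involutive_def)
  then show "induced r (induced r p) = p"
    by (simp add: p(1) induced_apply)
qed

lemma nd_inv_solution_induced_Times:
  assumes "nd_inv_solution Y r" and "nd_inv_solution W r"
  shows "nd_inv_solution (Y \<times> W) (induced r)"
  using assms is_solution_induced_Times nondegenerate_induced_Times involutive_induced_Times
  unfolding nd_inv_solution_def by blast

lemma nd_invariant_induced_Times:
  assumes "nd_inv_solution X r" and "nd_invariant X r Y"
  shows "nd_invariant (X \<times> X) (induced r) (Y \<times> X)"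
proof -
  have "nd_inv_solution (Y \<times> X) (induced r)"
    using assms by (simp add: nd_invariant_def nd_inv_solution_induced_Times)
  moreover from this have "induced r ` ((Y \<times> X) \<times> (Y \<times> X)) \<subseteq> (Y \<times> X) \<times> (Y \<times> X)"
    unfolding nd_inv_solution_def is_solution_def by blast
  ultimately show ?thesis
    using assms(2) by (auto simp: nd_invariant_def)
qed

lemma decomposable_induced:
  assumes "nd_inv_solution X r" and "decomposable X r"
  shows "decomposable (X \<times> X) (induced r)"
proof -
  obtain Y Z where YZ: "Y \<noteq> {}" "Z \<noteq> {}" "Y \<inter> Z = {}" "X = Y \<union> Z"
      "nd_invariant X r Y" "nd_invariant X r Z"
    using assms(2) unfolding decomposable_def by blast
  then have "X \<noteq> {}"
    by auto
  then show ?thesis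
    unfolding decomposable_def
    using YZ nd_invariant_induced_Times[OF assms(1)]
    by (intro exI[of _ "Y \<times> X"] exI[of _ "Z \<times> X"]) auto
qed

lemma ret_rel_refl:
  assumes "\<forall>x\<in>X. \<forall>z\<in>X. sig r x z \<in> X" and "x \<in> X"
  shows "(x, x) \<in> ret_rel X r m"
  using assms(2) by (induction m arbitrary: x) (auto simp: assms(1))

lemma ret_rel_induced_Times:
  "ret_rel (Y \<times> W) (induced r) m =
     {((x1, x2), (y1, y2)). (x1, y1) \<in> ret_rel Y r m \<and> (x2, y2) \<in> ret_rel W r m}"
proof (induction m)
  case 0
  then show ?case
    by auto
next
  case (Suc m)
  show ?case
    by (auto simp: Suc.IH sig_induced)
qed

lemma card_quotient_Times:
  assumes "\<And>x. x \<in> X \<Longrightarrow> (x, x) \<in> R" and "\<And>y. y \<in> Y \<Longrightarrow> (y, y) \<in> S"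
  shows "card ((X \<times> Y) // {((x1, y1), (x2, y2)). (x1, x2) \<in> R \<and> (y1, y2) \<in> S})
      = card (X // R) * card (Y // S)"
    (is "card ((X \<times> Y) // ?RS) = _")
proof -
  have "?RS `` {(x, y)} = R `` {x} \<times> S `` {y}" for x y
    by auto
  then have quotient_eq: "(X \<times> Y) // ?RS = (\<lambda>(A, B). A \<times> B) ` ((X // R) \<times> (Y // S))"
    unfolding quotient_def by fastforce
  have "A \<noteq> {}" if "A \<in> X // R" for A
    using that assms(1) unfolding quotient_def by blast
  moreover have "B \<noteq> {}" if "B \<in> Y // S" for B
    using that assms(2) unfolding quotient_def by blast
  ultimately have "inj_on (\<lambda>(A, B). A \<times> B) ((X // R) \<times> (Y // S))"
    by (auto simp: inj_on_def times_eq_iff)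
  then show ?thesis
    by (simp add: quotient_eq card_image card_cartesian_product)
qed

lemma ret_card_induced:
  assumes "nd_inv_solution X r"
  shows "ret_card (X \<times> X) (induced r) m = ret_card X r m ^ 2"
proof -
  have "\<forall>x\<in>X. \<forall>z\<in>X. sig r x z \<in> X"
    using assms unfolding nd_inv_solution_def nondegenerate_def bij_betw_def by blast
  then show ?thesis
    unfolding ret_card_def ret_rel_induced_Times
    by (simp add: card_quotient_Times ret_rel_refl power2_eq_square)
qed

theorem lemma3p10:
  fixes X :: "'a set" and r :: "'a sol_map"
  assumes "finite X" and "nd_inv_solution X r"
  shows "(irretractable X r \<longrightarrow> irretractable (X \<times> X) (induced r))
    \<and> (\<forall>l. multipermutation_level X r l \<longrightarrow> multipermutation_level (X \<times> X) (induced r) l)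
    \<and> (decomposable X r \<longrightarrow> decomposable (X \<times> X) (induced r))"
proof -
  have "ret_card (X \<times> X) (induced r) m = 1 \<longleftrightarrow> ret_card X r m = 1" for m
    using assms(2) by (simp add: ret_card_induced)
  then show ?thesis
    unfolding irretractable_def multipermutation_level_def
    using decomposable_induced[OF assms(2)] by simp
qed

end
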